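(* Let $T$ be a basic maximal rigid object of $\mathcal{C}_n$ with top summand $T_1=(1,n-1)$, let $*$ be either $\mathcal{T}$ or $\mathcal{D}$, and let $X\in\mathcal{F}$. (i) $R(X)\cap\operatorname{add}T$ is empty if and only if $X\in\operatorname{add}\tau T$. (ii) For any $T$-subwing triple $(T_i;T_j,T_k)$, at most one of $T_j$ and $T_k$ lies in $R^*(X)$. (iii) If $R^*(X)\cap\operatorname{add}T$ is non-empty, there is a unique string in the quiver of $\Lambda_T$ which traverses each of the vertices corresponding to the indecomposables in $R^*(X)\cap\operatorname{add}T$ exactly once, traverses no other vertex, and ends in the vertex corresponding to the summand in $R^*(X)\cap\operatorname{add}T$ of highest quasilength. (iv) A string as in (iii) contains no $\mathcal{D}$-arrow and no inverse of a $\mathcal{D}$-arrow.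
   Context: Let $k$ be algebraically closed, $n\ge2$, $\mathcal{T}_n$ the tube of rank $n$ (finite-dimensional nilpotent representations of the cyclically oriented $\tilde A_{n-1}$-quiver; AR-translation $\tau$), $\mathcal{C}_n=D^b(\mathcal{T}_n)/\tau^{-1}[1]$ the cluster tube, with indecomposables identified with those of $\mathcal{T}_n$. Indecomposables have coordinates $(a,b)$, $a\in\mathbb{Z}/n$ (represented in $\{1,\dots,n\}$), $b\ge1$ the quasilength, with $\tau(a,b)=(a-1,b)$ and irreducible maps $(a,b)\to(a,b+1)$, $(a,b)\to(a+1,b-1)$. For indecomposables $X,Y$, $\operatorname{Hom}_{\mathcal{C}_n}(X,Y)=\operatorname{Hom}_{\mathcal{T}_n}(X,Y)\oplus\operatorname{Hom}_{D^b}(X,\tau^{-1}Y[1])$; elements of the first summand are $\mathcal{T}$-maps, of the second $\mathcal{D}$-maps. $R^{\mathcal{T}}(X)$ (resp. $R^{\mathcal{D}}(X)$) is the set of indecomposables with a nonzero $\mathcal{T}$-map (resp. $\mathcal{D}$-map) to $X$, and $R(X)=R^{\mathcal{T}}(X)\cup R^{\mathcal{D}}(X)$. Wing of $X=(a,i)$, $i\le n-1$: $\mathcal{W}_X=\{(a+s,i'):s\ge0,i'\ge1,s+i'\le i\}$. $T=\bigoplus_{i=1}^{n-1}T_i$ is basic maximal rigid ($\operatorname{Ext}^1(T,T)=0$ and $\operatorname{Ext}^1(T\oplus Y,T\oplus Y)=0\Rightarrow Y\in\operatorname{add}T$); its unique summand of quasilength $n-1$ is the top summand $T_1$, all summands lie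 in $\mathcal{W}_{T_1}$, and coordinates are chosen with $T_1=(1,n-1)$. $\mathcal{F}$ is the set of indecomposables $(a,b)$, $a\in\{1,\dots,n\}$, with $b\le n-1$ or $a+b\le2n-1$. Subwing triples: non-degenerate $(X;Y,Z)$ with $X=(a,b)$, $3\le b\le n-1$, $Y=(a,c)$, $Z=(a+c+1,b-c-1)$, $1\le c\le b-2$; degenerate: $X=(a,b)$, $2\le b\le n-1$, and $(Y,Z)=((a,b-1),0)$ or $(0,(a+1,b-1))$; a $T$-subwing triple is one whose nonzero members are summands of $T$. The quiver of $\Lambda_T=\operatorname{End}_{\mathcal{C}_n}(T)^{\mathrm{op}}$ has vertex $i$ for each $T_i$ and arrows $i\to j$ for maps $T_j\to T_i$ irreducible in $\operatorname{add}T$, called $\mathcal{T}$- or $\mathcal{D}$-arrows according to the type of map. A string is a trivial string at a vertex, or a word in arrows and formal inverses with matching endpoints, no letter followed by its inverse, and no subword of it or its inverse a zero relation of $\Lambda_T$; its traversed vertices are the endpoints of its letters. *)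

theory Defs
  imports Main
begin

text \<open>An indecomposable is a pair (a,b)
  with a in {1..n} (position, taken mod n) and b >= 1 the quasilength. The module (a,b)
  is uniserial with socle S_a and composition factors S_a, S_(a+1), ..., S_(a+b-1).\<close>

type_synonym ind = "int \<times> int"
datatype kind = KT | KD
type_synonym mor = "kind \<times> ind \<times> ind \<times> int"

definition cnorm :: "int \<Rightarrow> int \<Rightarrow> int" where
  "cnorm n a = (a - 1) mod n + 1"

definition ind :: "int \<Rightarrow> ind set" where
  "ind n = {(a, b). 1 \<le> a \<and> a \<le> n \<and> 1 \<le> b}"

definition tau :: "int \<Rightarrow> ind \<Rightarrow> ind" where
  "tau n X = (cnorm n (fst X - 1), snd X)"

definition tauinv :: "int \<Rightarrow> ind \<Rightarrow> ind" where
  "tauinv n X = (cnorm n (fst X + 1), snd X)"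

text \<open>Basis of Hom_T(X,Y): the map killing the bottom t composition factors of X and
  embedding the quotient as a submodule of Y.\<close>
definition tidx :: "int \<Rightarrow> ind \<Rightarrow> ind \<Rightarrow> int set" where
  "tidx n X Y = {t. 0 \<le> t \<and> t < snd X \<and> t mod n = (fst Y - fst X) mod n \<and> snd X - t \<le> snd Y}"

text \<open>Basis of Hom_D(X, tau^-1 Y [1]) = Ext^1_T(X, tau^-1 Y) = D Hom_T(tau^-1 Y, tau X)
  (dual basis).\<close>
definition didx :: "int \<Rightarrow> ind \<Rightarrow> ind \<Rightarrow> int set" where
  "didx n X Y = tidx n (tauinv n Y) (tau n X)"

definition idx :: "int \<Rightarrow> kind \<Rightarrow> ind \<Rightarrow> ind \<Rightarrow> int set" where
  "idx n k X Y = (case k of KT \<Rightarrow> tidx n X Y | KD \<Rightarrow> didx n X Y)"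

definition morphs :: "int \<Rightarrow> ind \<Rightarrow> ind \<Rightarrow> mor set" where
  "morphs n X Y = {(k, X, Y, i) | k i. i \<in> idx n k X Y}"

definition mkind :: "mor \<Rightarrow> kind" where "mkind m = fst m"
definition msrc :: "mor \<Rightarrow> ind" where "msrc m = fst (snd m)"
definition mtgt :: "mor \<Rightarrow> ind" where "mtgt m = fst (snd (snd m))"
definition mindex :: "mor \<Rightarrow> int" where "mindex m = snd (snd (snd m))"

text \<open>Composition g o f of basis morphisms (f first), None meaning zero.
  Only used when mtgt f = msrc g.\<close>
definition comp :: "int \<Rightarrow> mor \<Rightarrow> mor \<Rightarrow> mor option" where
  "comp n g f = (let X = msrc f; Z = mtgt g; t = mindex f; u = mindex g in
     (case (mkind f, mkind g) of
        (KT, KT) \<Rightarrow> if t + u < snd X then Some (KT, X, Z, t + u) else None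
      | (KD, KT) \<Rightarrow> if t - u \<in> didx n X Z then Some (KD, X, Z, t - u) else None
      | (KT, KD) \<Rightarrow> if u - t \<in> didx n X Z then Some (KD, X, Z, u - t) else None
      | (KD, KD) \<Rightarrow> None))"

definition homC :: "int \<Rightarrow> ind \<Rightarrow> ind \<Rightarrow> bool" where
  "homC n X Y \<longleftrightarrow> tidx n X Y \<noteq> {} \<or> didx n X Y \<noteq> {}"

text \<open>In C_n we have [1] = tau, so Ext^1(X,Y) = Hom(X, tau Y).\<close>
definition ext1 :: "int \<Rightarrow> ind \<Rightarrow> ind \<Rightarrow> bool" where
  "ext1 n X Y \<longleftrightarrow> homC n X (tau n Y)"

text \<open>A basic object is represented by its (finite) set of indecomposable summands.\<close>
definition rigid :: "int \<Rightarrow> ind set \<Rightarrow> bool" where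
  "rigid n S \<longleftrightarrow> S \<subseteq> ind n \<and> (\<forall>X\<in>S. \<forall>Y\<in>S. \<not> ext1 n X Y)"

definition maxrigid :: "int \<Rightarrow> ind set \<Rightarrow> bool" where
  "maxrigid n S \<longleftrightarrow> finite S \<and> rigid n S \<and> (\<forall>Y\<in>ind n. rigid n (insert Y S) \<longrightarrow> Y \<in> S)"

definition Fregion :: "int \<Rightarrow> ind set" where
  "Fregion n = {(a, b) \<in> ind n. b \<le> n - 1 \<or> a + b \<le> 2 * n - 1}"

definition Rk :: "int \<Rightarrow> kind \<Rightarrow> ind \<Rightarrow> ind set" where
  "Rk n k X = {Y \<in> ind n. idx n k Y X \<noteq> {}}"

definition Rall :: "int \<Rightarrow> ind \<Rightarrow> ind set" where
  "Rall n X = Rk n KT X \<union> Rk n KD X"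

text \<open>Subwing triples; None stands for the zero object.\<close>
definition subwing_triple :: "int \<Rightarrow> ind \<Rightarrow> ind option \<Rightarrow> ind option \<Rightarrow> bool" where
  "subwing_triple n X Y Z \<longleftrightarrow>
     (\<exists>a b c. X = (a, b) \<and> 1 \<le> a \<and> a \<le> n \<and> 3 \<le> b \<and> b \<le> n - 1 \<and> 1 \<le> c \<and> c \<le> b - 2 \<and>
        Y = Some (a, c) \<and> Z = Some (cnorm n (a + c + 1), b - c - 1))
   \<or> (\<exists>a b. X = (a, b) \<and> 1 \<le> a \<and> a \<le> n \<and> 2 \<le> b \<and> b \<le> n - 1 \<and>
        ((Y = Some (a, b - 1) \<and> Z = None) \<or> (Y = None \<and> Z = Some (cnorm n (a + 1), b - 1))))"

definition Tsubwing :: "int \<Rightarrow> ind set \<Rightarrow> ind \<Rightarrow> ind option \<Rightarrow> ind option \<Rightarrow> bool" where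
  "Tsubwing n S X Y Z \<longleftrightarrow> subwing_triple n X Y Z \<and> X \<in> S \<and> set_option Y \<subseteq> S \<and> set_option Z \<subseteq> S"

text \<open>Radical of add T on basis morphisms: everything except identities.\<close>
definition radmorphs :: "int \<Rightarrow> ind \<Rightarrow> ind \<Rightarrow> mor set" where
  "radmorphs n X Y = morphs n X Y - {(KT, X, X, 0)}"

text \<open>Irreducible basis morphisms in add T (not in rad^2); these are the arrows of the
  quiver of End(T)^op. An arrow given by the map m : T_j -> T_i goes from vertex i to j.\<close>
definition irreducible :: "int \<Rightarrow> ind set \<Rightarrow> mor \<Rightarrow> bool" where
  "irreducible n S m \<longleftrightarrow> msrc m \<in> S \<and> mtgt m \<in> S \<and> m \<in> radmorphs n (msrc m) (mtgt m) \<and>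
     \<not> (\<exists>W\<in>S. \<exists>m1\<in>radmorphs n (msrc m) W. \<exists>m2\<in>radmorphs n W (mtgt m). comp n m2 m1 = Some m)"

definition asrc :: "mor \<Rightarrow> ind" where "asrc a = mtgt a"
definition atgt :: "mor \<Rightarrow> ind" where "atgt a = msrc a"

text \<open>Evaluation of a path a1 a2 ... am (a1 first in walking order) as a composite map.\<close>
fun peval :: "int \<Rightarrow> mor list \<Rightarrow> mor option" where
  "peval n [] = None"
| "peval n [a] = Some a"
| "peval n (a # rest) = (case peval n rest of None \<Rightarrow> None | Some m \<Rightarrow> comp n a m)"

definition zero_relation :: "int \<Rightarrow> ind set \<Rightarrow> mor list \<Rightarrow> bool" where
  "zero_relation n S p \<longleftrightarrow> p \<noteq> [] \<and> (\<forall>a\<in>set p. irreducible n S a) \<and>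
     (\<forall>i. Suc i < length p \<longrightarrow> atgt (p ! i) = asrc (p ! Suc i)) \<and> peval n p = None"

type_synonym letter = "bool \<times> mor"

definition lstart :: "letter \<Rightarrow> ind" where
  "lstart l = (if fst l then asrc (snd l) else atgt (snd l))"
definition lend :: "letter \<Rightarrow> ind" where
  "lend l = (if fst l then atgt (snd l) else asrc (snd l))"

text \<open>A string: start vertex and list of letters (True = arrow, False = formal inverse).\<close>
type_synonym qstring = "ind \<times> letter list"

definition is_string :: "int \<Rightarrow> ind set \<Rightarrow> qstring \<Rightarrow> bool" where
  "is_string n S w \<longleftrightarrow> (let v = fst w; ls = snd w in
     v \<in> S \<and> (\<forall>l\<in>set ls. irreducible n S (snd l)) \<and>
     (ls \<noteq> [] \<longrightarrow> lstart (hd ls) = v) \<and>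
     (\<forall>i. Suc i < length ls \<longrightarrow> lend (ls ! i) = lstart (ls ! Suc i) \<and>
          ls ! Suc i \<noteq> (\<not> fst (ls ! i), snd (ls ! i))) \<and>
     (\<forall>i j. i \<le> j \<and> j < length ls \<longrightarrow>
        (let seg = drop i (take (Suc j) ls) in
          ((\<forall>l\<in>set seg. fst l) \<longrightarrow> \<not> zero_relation n S (map snd seg)) \<and>
          ((\<forall>l\<in>set seg. \<not> fst l) \<longrightarrow> \<not> zero_relation n S (rev (map snd seg))))))"

definition verts :: "qstring \<Rightarrow> ind list" where
  "verts w = fst w # map lend (snd w)"

definition traverses_exactly :: "qstring \<Rightarrow> ind set \<Rightarrow> bool" where
  "traverses_exactly w A \<longleftrightarrow> distinct (verts w) \<and> set (verts w) = A"

definition endv :: "qstring \<Rightarrow> ind" where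
  "endv w = last (verts w)"

end

theory Submission
  imports Defs
begin

text \<open>Read \<open>(a, b)\<close> as the interval \<open>[a, a + b - 1]\<close> of positions of its composition factors.
  Rigidity against \<open>T\<^sub>1 = (1, n - 1)\<close> puts every summand of \<open>T\<close> into the wing of \<open>T\<^sub>1\<close>, where
  \<open>Ext\<^sup>1\<close> between two modules means that their intervals cross. For fixed \<open>X\<close> and kind \<open>*\<close>, a
  summand lies in \<open>R\<^sup>*(X)\<close> iff its interval covers a fixed position \<open>p\<close> and it satisfies a condition
  inherited by sub-wings covering \<open>p\<close>. Non-crossing makes these summands a chain under inclusion, so
  they are never the two disjoint halves of a subwing triple, and maximality of \<open>T\<close> forces consecutive
  members to share their start or their end: otherwise the interval in between could be added to \<open>T\<close>.
  Hence the irreducible maps inside the chain are exactly the \<open>\<T>\<close>-maps between consecutive members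
  (\<open>\<D>\<close>-maps factor through \<open>T\<^sub>1\<close>), a string through the chain ending at its top must climb it in
  order of quasilength, and climbing it does give a string, since composites of monomorphisms with a
  common start, or of epimorphisms with a common end, do not vanish. Part (i) is
  \<open>Hom(Y, X) = Ext\<^sup>1(Y, \<tau>\<^sup>-\<^sup>1 X)\<close>: if no summand maps to \<open>X\<close>, then \<open>\<tau>\<^sup>-\<^sup>1 X\<close> is compatible with \<open>T\<close>.\<close>

section \<open>Positions modulo \<open>n\<close>\<close>

lemma cnorm_bounds: "0 < n \<Longrightarrow> 1 \<le> cnorm n q \<and> cnorm n q \<le> n"
  unfolding cnorm_def by (simp add: pos_mod_bound add1_zle_eq)

lemma cnorm_mod_eq: "cnorm n q mod n = q mod n"
  unfolding cnorm_def by (metis diff_add_cancel mod_add_left_eq)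

lemma cnorm_eqI:
  assumes "1 \<le> p" "p \<le> n" "q mod n = p mod n"
  shows "cnorm n q = p"
proof -
  have "(q - 1) mod n = (p - 1) mod n" using assms(3) by (metis mod_diff_left_eq)
  also have "\<dots> = p - 1" using assms(1,2) by simp
  finally show ?thesis unfolding cnorm_def by simp
qed

lemma cnorm_cong: "a mod n = b mod n \<Longrightarrow> cnorm n a = cnorm n b"
  unfolding cnorm_def by (metis mod_diff_left_eq)

lemma mod_eq_if_small:
  fixes d n :: int
  assumes "- n \<le> d" "d < n"
  shows "d mod n = (if 0 \<le> d then d else d + n)"
proof (cases "0 \<le> d")
  case False
  have "d mod n = (d + n) mod n" by simp
  also have "\<dots> = d + n" by (rule mod_pos_pos_trivial) (use assms False in auto)
  finally show ?thesis using False by simp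
next
  case True
  then show ?thesis using assms by (simp add: mod_pos_pos_trivial)
qed

lemma fst_tau_mod: "fst (tau n X) mod n = (fst X - 1) mod n"
  unfolding tau_def by (simp add: cnorm_mod_eq)

lemma fst_tauinv_mod: "fst (tauinv n X) mod n = (fst X + 1) mod n"
  unfolding tauinv_def by (simp add: cnorm_mod_eq)

lemma tau_tauinv:
  assumes "1 \<le> fst X" "fst X \<le> n"
  shows "tau n (tauinv n X) = X"
proof -
  have "(fst (tauinv n X) - 1) mod n = (fst X + 1 - 1) mod n"
    using fst_tauinv_mod[of n X] by (metis mod_diff_left_eq)
  then show ?thesis unfolding tau_def using assms by (auto simp: tauinv_def intro!: prod_eqI cnorm_eqI)
qed

lemma tauinv_tau:
  assumes "1 \<le> fst X" "fst X \<le> n"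
  shows "tauinv n (tau n X) = X"
proof -
  have "(fst (tau n X) + 1) mod n = (fst X - 1 + 1) mod n"
    using fst_tau_mod[of n X] by (metis mod_add_left_eq)
  then show ?thesis unfolding tauinv_def using assms by (auto simp: tau_def intro!: prod_eqI cnorm_eqI)
qed

section \<open>Hom spaces out of and into modules of quasilength at most \<open>n\<close>\<close>

lemma tidx_eq_if_short_source:
  assumes "0 < n" "snd Y \<le> n"
  shows "tidx n Y Z = (let t = (fst Z - fst Y) mod n in
    if t < snd Y \<and> snd Y - t \<le> snd Z then {t} else {})"
proof -
  have "t = (fst Z - fst Y) mod n" if "0 \<le> t" "t < snd Y" "t mod n = (fst Z - fst Y) mod n" for t
    using that assms by simp
  then show ?thesis unfolding tidx_def Let_def using assms(1) by auto
qed

lemma tidx_ne_iff_short_target: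
  assumes "0 < n" "snd Z \<le> n"
  shows "tidx n Y Z \<noteq> {} \<longleftrightarrow> cnorm n (fst Y + snd Y - fst Z) \<le> min (snd Y) (snd Z)"
proof
  assume "tidx n Y Z \<noteq> {}"
  \<comment> \<open>\<open>snd Y - t\<close> is the quasilength of the image, which lies in \<open>[1, n]\<close>\<close>
  then obtain t where t: "0 \<le> t" "t < snd Y" "n dvd t - (fst Z - fst Y)" "snd Y - t \<le> snd Z"
    unfolding tidx_def by (auto simp: mod_eq_dvd_iff)
  have "(fst Y + snd Y - fst Z) - (snd Y - t) = t - (fst Z - fst Y)" by simp
  with t(3) have "n dvd (fst Y + snd Y - fst Z) - (snd Y - t)" by (simp only:)
  then have "cnorm n (fst Y + snd Y - fst Z) = snd Y - t"
    using t assms by (intro cnorm_eqI) (auto simp: mod_eq_dvd_iff)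
  then show "cnorm n (fst Y + snd Y - fst Z) \<le> min (snd Y) (snd Z)" using t by simp
next
  define s where "s = cnorm n (fst Y + snd Y - fst Z)"
  assume "cnorm n (fst Y + snd Y - fst Z) \<le> min (snd Y) (snd Z)"
  then have s: "s \<le> snd Y" "s \<le> snd Z" "1 \<le> s" using cnorm_bounds[OF assms(1)] s_def by auto
  have "n dvd s - (fst Y + snd Y - fst Z)" using cnorm_mod_eq[of n] s_def by (simp add: mod_eq_dvd_iff)
  moreover have "(snd Y - s) - (fst Z - fst Y) = - (s - (fst Y + snd Y - fst Z))" by simp
  ultimately have "n dvd (snd Y - s) - (fst Z - fst Y)" by (simp only: dvd_minus_iff)
  then have "snd Y - s \<in> tidx n Y Z" using s unfolding tidx_def by (auto simp: mod_eq_dvd_iff)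
  then show "tidx n Y Z \<noteq> {}" by auto
qed

lemma didx_eq_if_short:
  assumes "0 < n" "snd W \<le> n"
  shows "didx n Y W = (let t = (fst Y - fst W - 2) mod n in
    if t < snd W \<and> snd W - t \<le> snd Y then {t} else {})"
proof -
  have "(fst (tau n Y) - fst (tauinv n W)) mod n = ((fst Y - 1) - (fst W + 1)) mod n"
    by (rule mod_diff_cong) (simp_all add: fst_tau_mod fst_tauinv_mod)
  then show ?thesis unfolding didx_def using assms
    by (simp add: tidx_eq_if_short_source tau_def tauinv_def)
qed

lemma didx_ne_iff_short_target:
  assumes "0 < n" "snd Y \<le> n"
  shows "didx n Y X \<noteq> {} \<longleftrightarrow> cnorm n (fst X + snd X + 2 - fst Y) \<le> min (snd X) (snd Y)"
proof -
  have "(fst (tauinv n X) + snd X - fst (tau n Y)) mod n = ((fst X + 1) + snd X - (fst Y - 1)) mod n"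
    by (intro mod_diff_cong mod_add_cong) (simp_all add: fst_tau_mod fst_tauinv_mod)
  also have "(fst X + 1) + snd X - (fst Y - 1) = fst X + snd X + 2 - fst Y" by simp
  finally have "cnorm n (fst (tauinv n X) + snd X - fst (tau n Y)) = cnorm n (fst X + snd X + 2 - fst Y)"
    by (rule cnorm_cong)
  then show ?thesis unfolding didx_def using assms
    by (simp add: tidx_ne_iff_short_target tau_def tauinv_def)
qed

section \<open>Summands of \<open>T\<close> lie in the wing of \<open>T\<^sub>1\<close>\<close>

definition in_top_wing :: "int \<Rightarrow> ind \<Rightarrow> bool" where
  "in_top_wing n Y \<longleftrightarrow> 1 \<le> fst Y \<and> 1 \<le> snd Y \<and> fst Y + snd Y \<le> n"

definition has_tmap :: "ind \<Rightarrow> ind \<Rightarrow> bool" where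
  "has_tmap Y Z \<longleftrightarrow> fst Y \<le> fst Z \<and> fst Z < fst Y + snd Y \<and> fst Y + snd Y - fst Z \<le> snd Z"

definition crosses :: "ind \<Rightarrow> ind \<Rightarrow> bool" where
  "crosses Y W \<longleftrightarrow> fst Y < fst W \<and> fst W \<le> fst Y + snd Y \<and> fst Y + snd Y < fst W + snd W"

lemma tidx_top_wing:
  assumes "in_top_wing n Y" "1 \<le> fst Z" "fst Z \<le> n"
  shows "tidx n Y Z = (if has_tmap Y Z then {fst Z - fst Y} else {})"
proof -
  have "(fst Z - fst Y) mod n = (if fst Y \<le> fst Z then fst Z - fst Y else fst Z - fst Y + n)"
    using assms mod_eq_if_small[of n "fst Z - fst Y"] unfolding in_top_wing_def by auto
  then show ?thesis using assms
    by (auto simp: tidx_eq_if_short_source Let_def has_tmap_def in_top_wing_def)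
qed

lemma didx_top_wing:
  assumes "in_top_wing n Y" "in_top_wing n W" "1 < fst Y"
  shows "didx n Y W = (if fst W + 2 \<le> fst Y \<and> fst Y \<le> fst W + snd W + 1 \<and>
    fst W + snd W + 2 \<le> fst Y + snd Y then {fst Y - fst W - 2} else {})"
proof -
  have "(fst Y - fst W - 2) mod n = (if fst W + 2 \<le> fst Y then fst Y - fst W - 2 else fst Y - fst W - 2 + n)"
    using assms mod_eq_if_small[of n "fst Y - fst W - 2"] unfolding in_top_wing_def by auto
  then show ?thesis using assms
    by (auto simp: didx_eq_if_short Let_def in_top_wing_def)
qed

lemma didx_top_wing_from_start:
  assumes "in_top_wing n W" "fst Y = 1" "1 \<le> snd Y"
  shows "didx n Y W = (if fst W + snd W = n then {n - 1 - fst W} else {})"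
proof -
  have "(fst Y - fst W - 2) mod n = n - 1 - fst W"
    using assms mod_eq_if_small[of n "fst Y - fst W - 2"] unfolding in_top_wing_def by auto
  then show ?thesis using assms
    by (auto simp: didx_eq_if_short Let_def in_top_wing_def)
qed

lemma fst_tau_top_wing:
  "in_top_wing n W \<Longrightarrow> fst (tau n W) = (if fst W = 1 then n else fst W - 1)"
  unfolding tau_def in_top_wing_def by (auto intro!: cnorm_eqI)

lemma ext1_top_wing:
  assumes Y: "in_top_wing n Y" and W: "in_top_wing n W"
  shows "ext1 n Y W \<longleftrightarrow> crosses Y W \<or> crosses W Y"
proof -
  have tidx_tau_iff: "tidx n A (tau n B) \<noteq> {} \<longleftrightarrow> crosses A B"
    if "in_top_wing n A" "in_top_wing n B" for A B
    using that fst_tau_top_wing[of n B] tidx_top_wing[of n A "tau n B"]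
    by (auto simp: in_top_wing_def has_tmap_def crosses_def tau_def)
  have "didx n Y (tau n W) = tidx n W (tau n Y)"
    unfolding didx_def using tauinv_tau[of W n] W unfolding in_top_wing_def by auto
  then show ?thesis unfolding ext1_def homC_def using tidx_tau_iff Y W by auto
qed

lemma maxrigid_subset_ind: "maxrigid n S \<Longrightarrow> S \<subseteq> ind n"
  unfolding maxrigid_def rigid_def by blast

lemma maxrigid_no_ext1: "maxrigid n S \<Longrightarrow> X \<in> S \<Longrightarrow> Y \<in> S \<Longrightarrow> \<not> ext1 n X Y"
  unfolding maxrigid_def rigid_def by blast

lemma maxrigid_memI:
  assumes mr: "maxrigid n S" and Y: "Y \<in> ind n" "\<not> ext1 n Y Y"
    and compat: "\<And>Z. Z \<in> S \<Longrightarrow> \<not> ext1 n Y Z \<and> \<not> ext1 n Z Y"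
  shows "Y \<in> S"
proof -
  have "rigid n (insert Y S)"
    unfolding rigid_def using maxrigid_subset_ind[OF mr] maxrigid_no_ext1[OF mr] Y compat by blast
  then show ?thesis using mr Y(1) unfolding maxrigid_def by blast
qed

lemma maxrigid_summand_in_top_wing:
  assumes n: "2 \<le> n" and mr: "maxrigid n S" and T1: "(1, n - 1) \<in> S" and Y: "Y \<in> S"
  shows "in_top_wing n Y"
proof -
  have ind: "1 \<le> fst Y" "fst Y \<le> n" "1 \<le> snd Y"
    using maxrigid_subset_ind[OF mr] Y unfolding ind_def by auto
  have rig: "\<not> ext1 n Y Y" "\<not> ext1 n (1, n - 1) Y"
    using maxrigid_no_ext1[OF mr] Y T1 by auto
  have short: "snd Y \<le> n - 1"
  proof (rule ccontr)
    assume "\<not> snd Y \<le> n - 1"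
    have "(fst (tau n Y) - fst Y) mod n = (fst Y - 1 - fst Y) mod n"
      by (rule mod_diff_cong) (simp_all add: fst_tau_mod)
    also have "\<dots> = (n - 1) mod n" using zmod_minus1[of n] n by simp
    finally have "n - 1 \<in> tidx n Y (tau n Y)"
      using \<open>\<not> snd Y \<le> n - 1\<close> n unfolding tidx_def by (auto simp: tau_def)
    then show False using rig(1) unfolding ext1_def homC_def by auto
  qed
  moreover have "fst Y + snd Y \<le> n"
  proof (rule ccontr)
    assume far: "\<not> fst Y + snd Y \<le> n"
    have tau: "tau n Y = (fst Y - 1, snd Y)"
      unfolding tau_def using far short ind by (auto intro!: cnorm_eqI)
    have "tidx n (1, n - 1) (tau n Y) \<noteq> {}"
      using tidx_top_wing[of n "(1, n - 1)" "tau n Y"] far short ind n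
      unfolding tau by (auto simp: in_top_wing_def has_tmap_def)
    then show False using rig(2) unfolding ext1_def homC_def by auto
  qed
  ultimately show ?thesis unfolding in_top_wing_def using ind by auto
qed

section \<open>Chains of summands covering a position\<close>

definition covers :: "ind \<Rightarrow> int \<Rightarrow> bool" where
  "covers Y p \<longleftrightarrow> fst Y \<le> p \<and> p < fst Y + snd Y"

definition in_wing :: "ind \<Rightarrow> ind \<Rightarrow> bool" where
  "in_wing U Y \<longleftrightarrow> fst Y \<le> fst U \<and> fst U + snd U \<le> fst Y + snd Y"

definition tmap :: "ind \<Rightarrow> ind \<Rightarrow> mor" where
  "tmap Y W = (KT, Y, W, fst W - fst Y)"

lemma radmorphs_iff:
  "m \<in> radmorphs n X Y \<longleftrightarrow> (\<exists>k i. m = (k, X, Y, i) \<and> i \<in> idx n k X Y) \<and> m \<noteq> (KT, X, X, 0)"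
  unfolding radmorphs_def morphs_def by auto

lemma comp_tmap_tmap:
  "fst W - fst Y < snd Y \<Longrightarrow> comp n (tmap U W) (tmap Y U) = Some (tmap Y W)"
  by (simp add: comp_def tmap_def msrc_def mtgt_def mindex_def mkind_def)

lemma comp_eq_tmapD:
  assumes "comp n (k2, U, W, i2) (k1, Y, U, i1) = Some (KT, Y, W, j)"
  shows "k1 = KT \<and> k2 = KT \<and> i1 + i2 = j \<and> i1 + i2 < snd Y"
  using assms unfolding comp_def msrc_def mtgt_def mindex_def mkind_def
  by (cases k1; cases k2) (auto split: if_splits)

lemma has_tmap_antisym: "has_tmap A B \<Longrightarrow> has_tmap B A \<Longrightarrow> A = B"
  unfolding has_tmap_def by (auto simp: prod_eq_iff)

definition tletter :: "ind \<Rightarrow> ind \<Rightarrow> letter" where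
  "tletter A B = (if has_tmap B A then (True, tmap B A) else (False, tmap A B))"

lemma lstart_tletter [simp]: "lstart (tletter A B) = A"
  and lend_tletter [simp]: "lend (tletter A B) = B"
  and mkind_tletter [simp]: "mkind (snd (tletter A B)) = KT"
  by (simp_all add: tletter_def lstart_def lend_def asrc_def atgt_def tmap_def msrc_def mtgt_def mkind_def)

lemma lend_inverse_letter: "lend (\<not> fst l, snd l) = lstart l"
  unfolding lend_def lstart_def by simp

lemma tletter_not_inverse: "A \<noteq> C \<Longrightarrow> tletter B C \<noteq> (\<not> fst (tletter A B), snd (tletter A B))"
proof
  assume "A \<noteq> C" and "tletter B C = (\<not> fst (tletter A B), snd (tletter A B))"
  then have "lend (tletter B C) = lend (\<not> fst (tletter A B), snd (tletter A B))" by simp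
  then show False using \<open>A \<noteq> C\<close> by (simp add: lend_inverse_letter)
qed

definition walk_of :: "ind list \<Rightarrow> qstring" where
  "walk_of vs = (hd vs, map (\<lambda>i. tletter (vs ! i) (vs ! Suc i)) [0..<length vs - 1])"

lemma length_verts: "length (verts w) = Suc (length (snd w))"
  unfolding verts_def by simp

lemma verts_nth_Suc: "i < length (snd w) \<Longrightarrow> verts w ! Suc i = lend (snd w ! i)"
  unfolding verts_def by simp

lemma verts_walk_of: "vs \<noteq> [] \<Longrightarrow> verts (walk_of vs) = vs"
  by (rule nth_equalityI) (auto simp: verts_def walk_of_def hd_conv_nth nth_Cons' split: nat.split)

lemma lstart_string_nth:
  assumes w: "is_string n S w" and i: "i < length (snd w)"
  shows "lstart (snd w ! i) = verts w ! i"
proof (cases i)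
  case 0
  then show ?thesis using w i unfolding is_string_def Let_def verts_def by (auto simp: hd_conv_nth)
next
  case (Suc k)
  then show ?thesis using w i verts_nth_Suc[of k w] unfolding is_string_def Let_def by auto
qed

text \<open>A descent \<open>xs ! i > xs ! Suc i\<close> would have to be recovered later on, since the last entry
  is maximal; the first later entry \<open>\<ge> xs ! i\<close> is then reached by a step jumping over \<open>xs ! i\<close>.\<close>
lemma sorted_if_no_value_skipped:
  fixes xs :: "'a::linorder list"
  assumes d: "distinct xs" and ne: "xs \<noteq> []" and mx: "\<forall>y\<in>set xs. y \<le> last xs"
    and nb: "\<forall>i. Suc i < length xs \<longrightarrow>
      (\<forall>y\<in>set xs. \<not> (xs ! i < y \<and> y < xs ! Suc i) \<and> \<not> (xs ! Suc i < y \<and> y < xs ! i))"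
  shows "sorted xs"
  unfolding sorted_iff_nth_Suc
proof (intro allI impI, rule ccontr)
  fix i assume i: "Suc i < length xs" and c: "\<not> xs ! i \<le> xs ! Suc i"
  define J where "J = {j. i < j \<and> j < length xs \<and> xs ! i \<le> xs ! j}"
  define j where "j = (LEAST j. j \<in> J)"
  have "length xs - 1 \<in> J" unfolding J_def using i mx ne by (auto simp: last_conv_nth)
  then have jJ: "j \<in> J" unfolding j_def by (rule LeastI)
  have jmin: "\<And>j'. j' \<in> J \<Longrightarrow> j \<le> j'" unfolding j_def by (rule Least_le)
  obtain k where k: "j = Suc k" using jJ unfolding J_def by (cases j) auto
  have ik: "i < k" using jJ c k unfolding J_def by (cases "k = i") auto
  have "k \<notin> J" using jmin k by fastforce
  then have xk: "xs ! k < xs ! i" using ik jJ k unfolding J_def by auto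
  have kl: "Suc k < length xs" and xj: "xs ! i \<le> xs ! j" using jJ k unfolding J_def by auto
  have "\<not> (xs ! k < xs ! i \<and> xs ! i < xs ! Suc k)" using nb kl i by auto
  then have "xs ! i = xs ! j" using xk xj k by auto
  then have "i = j" using d i kl k by (simp add: nth_eq_iff_index_eq)
  then show False using ik k by simp
qed

lemma peval_Cons:
  "rest \<noteq> [] \<Longrightarrow> peval n (a # rest) = (case peval n rest of None \<Rightarrow> None | Some m \<Rightarrow> comp n a m)"
  by (cases rest) auto

lemma peval_tmaps_common_end:
  fixes Y :: "nat \<Rightarrow> ind"
  assumes ik: "i \<le> k"
    and Y: "\<And>r. i \<le> r \<Longrightarrow> r \<le> k \<Longrightarrow>
      fst (Y r) + snd (Y r) = fst (Y (Suc r)) + snd (Y (Suc r)) \<and> 1 \<le> snd (Y r)"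
  shows "peval n (map (\<lambda>r. tmap (Y (Suc r)) (Y r)) [i..<Suc k]) = Some (tmap (Y (Suc k)) (Y i))
    \<and> fst (Y i) + snd (Y i) = fst (Y (Suc k)) + snd (Y (Suc k))"
  using ik
proof (induction i rule: inc_induct)
  case base
  then show ?case using Y[of k] ik by (simp add: tmap_def)
next
  case (step m)
  have "[m..<Suc k] = m # [Suc m..<Suc k]" using step.hyps by (simp add: upt_conv_Cons)
  moreover have "map (\<lambda>r. tmap (Y (Suc r)) (Y r)) [Suc m..<Suc k] \<noteq> []" using step.hyps by simp
  ultimately show ?case using step.IH Y[of m] step.hyps
    by (auto simp: peval_Cons comp_def tmap_def msrc_def mtgt_def mindex_def mkind_def Let_def)
qed

lemma peval_tmaps_common_start:
  fixes Y :: "nat \<Rightarrow> ind"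
  assumes ik: "i \<le> k"
    and Y: "\<And>r. i \<le> r \<Longrightarrow> r \<le> k \<Longrightarrow> fst (Y r) = fst (Y (Suc r)) \<and> 1 \<le> snd (Y r)"
  shows "peval n (rev (map (\<lambda>r. tmap (Y r) (Y (Suc r))) [i..<Suc k])) = Some (tmap (Y i) (Y (Suc k)))
    \<and> fst (Y (Suc k)) = fst (Y i)"
  using ik
proof (induction k rule: dec_induct)
  case base
  then show ?case using Y[of i] ik by (simp add: tmap_def)
next
  case (step m)
  have "rev (map (\<lambda>r. tmap (Y r) (Y (Suc r))) [i..<Suc m]) \<noteq> []" using step.hyps by simp
  then show ?case using step.IH Y[of "Suc m"] Y[of i] step.hyps
    by (auto simp: peval_Cons comp_def tmap_def msrc_def mtgt_def mindex_def mkind_def Let_def)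
qed

text \<open>The prototype of \<open>C\<close> is \<open>R\<^sup>*(X) \<inter> add T\<close>, see \<open>pointed_chain_Rk\<close>.\<close>
locale pointed_chain =
  fixes n :: int and S :: "ind set" and C :: "ind set" and p :: int
  assumes two_le_n: "2 \<le> n" and maxrigid: "maxrigid n S" and top_summand: "(1, n - 1) \<in> S"
    and chain_subset: "C \<subseteq> S"
    and chain_covers: "\<And>Y. Y \<in> C \<Longrightarrow> covers Y p"
    and chain_closed: "\<And>Y U. Y \<in> C \<Longrightarrow> U \<in> S \<Longrightarrow> covers U p \<Longrightarrow> in_wing U Y \<Longrightarrow> U \<in> C"
begin

lemma summand_in_top_wing: "Y \<in> S \<Longrightarrow> in_top_wing n Y"
  using maxrigid_summand_in_top_wing two_le_n maxrigid top_summand by blast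

lemma chain_in_top_wing: "Y \<in> C \<Longrightarrow> in_top_wing n Y"
  using summand_in_top_wing chain_subset by blast

lemma summands_not_crossing: "Y \<in> S \<Longrightarrow> W \<in> S \<Longrightarrow> \<not> crosses Y W"
  using maxrigid_no_ext1[OF maxrigid] ext1_top_wing summand_in_top_wing by blast

lemma tidx_summands:
  "Y \<in> S \<Longrightarrow> W \<in> S \<Longrightarrow> tidx n Y W = (if has_tmap Y W then {fst W - fst Y} else {})"
  using tidx_top_wing[of n Y W] summand_in_top_wing[of Y] summand_in_top_wing[of W]
  unfolding in_top_wing_def by auto

lemma chain_nested:
  assumes "Y \<in> C" "W \<in> C"
  shows "in_wing Y W \<or> in_wing W Y"
proof -
  have "\<not> crosses Y W" "\<not> crosses W Y"
    using summands_not_crossing assms chain_subset by blast+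
  then show ?thesis using chain_covers[OF assms(1)] chain_covers[OF assms(2)]
    unfolding crosses_def covers_def in_wing_def by auto
qed

lemma chain_eq_if_snd_eq: "Y \<in> C \<Longrightarrow> W \<in> C \<Longrightarrow> snd Y = snd W \<Longrightarrow> Y = W"
  using chain_nested[of Y W] unfolding in_wing_def by (auto simp: prod_eq_iff)

lemma chain_in_wing_if_snd_less: "Y \<in> C \<Longrightarrow> W \<in> C \<Longrightarrow> snd Y < snd W \<Longrightarrow> in_wing Y W"
  using chain_nested[of Y W] chain_in_top_wing[of Y] chain_in_top_wing[of W]
  unfolding in_wing_def in_top_wing_def by auto

definition chain_adjacent :: "ind \<Rightarrow> ind \<Rightarrow> bool" where
  "chain_adjacent A B \<longleftrightarrow> (\<forall>U\<in>C. \<not> (snd A < snd U \<and> snd U < snd B) \<and> \<not> (snd B < snd U \<and> snd U < snd A))"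

lemma chain_neighbours_share_end:
  assumes Y: "Y \<in> C" and W: "W \<in> C" and lt: "snd Y < snd W" and adj: "chain_adjacent Y W"
  shows "fst Y = fst W \<or> fst Y + snd Y = fst W + snd W"
proof (rule ccontr)
  assume c: "\<not> (fst Y = fst W \<or> fst Y + snd Y = fst W + snd W)"
  have YW: "in_wing Y W" using chain_in_wing_if_snd_less Y W lt by blast
  \<comment> \<open>\<open>U\<close> spans from the start of \<open>W\<close> to the end of \<open>Y\<close>; it will turn out to be a summand strictly between them\<close>
  define U where "U = (fst W, fst Y + snd Y - fst W)"
  have wY: "in_top_wing n Y" and wW: "in_top_wing n W" using chain_in_top_wing Y W by auto
  have wU: "in_top_wing n U" using wY wW YW c unfolding U_def in_top_wing_def in_wing_def by auto
  have coverU: "covers U p" using chain_covers[OF Y] YW c unfolding U_def covers_def in_wing_def by auto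
  have between: "(fst V = fst Y \<and> snd V = snd Y) \<or> (fst V = fst W \<and> snd V = snd W)"
    if "V \<in> S" "in_wing Y V" "in_wing V W" for V
  proof -
    have "covers V p" using chain_covers[OF Y] that unfolding covers_def in_wing_def by auto
    then have "V \<in> C" using chain_closed[OF W that(1)] that(3) by blast
    then have "snd V = snd Y \<or> snd V = snd W"
      using adj that(2,3) unfolding chain_adjacent_def in_wing_def by fastforce
    then show ?thesis using chain_eq_if_snd_eq \<open>V \<in> C\<close> Y W by blast
  qed
  have compatible: "\<not> crosses V U \<and> \<not> crosses U V" if "V \<in> S" for V
  proof -
    have "\<not> crosses V Y" "\<not> crosses Y V" "\<not> crosses V W" "\<not> crosses W V"
      using summands_not_crossing that Y W chain_subset by blast+
    then show ?thesis using between[OF that] summand_in_top_wing[OF that] wY wW YW c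
      unfolding U_def crosses_def in_wing_def in_top_wing_def
      by (simp only: fst_conv snd_conv) (smt (verit))
  qed
  have "U \<in> S"
  proof (rule maxrigid_memI[OF maxrigid])
    show "U \<in> ind n" using wU unfolding in_top_wing_def ind_def by (cases U) auto
    show "\<not> ext1 n U U" using ext1_top_wing[OF wU wU] unfolding crosses_def by auto
    show "\<not> ext1 n U V \<and> \<not> ext1 n V U" if "V \<in> S" for V
      using ext1_top_wing[OF wU summand_in_top_wing[OF that]]
        ext1_top_wing[OF summand_in_top_wing[OF that] wU] compatible[OF that] by auto
  qed
  moreover have "in_wing U W" using YW unfolding U_def in_wing_def by auto
  ultimately have "U \<in> C" using chain_closed[OF W _ coverU] by blast
  moreover have "snd Y < snd U" "snd U < snd W" using YW c unfolding U_def in_wing_def by auto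
  ultimately show False using adj unfolding chain_adjacent_def by auto
qed

lemma no_irreducible_dmap:
  assumes Y: "Y \<in> C" and W: "W \<in> C" and ne: "Y \<noteq> W" and i: "i \<in> didx n Y W"
  shows "\<not> irreducible n S (KD, Y, W, i)"
proof (cases "fst Y = 1")
  case False
  have wY: "in_top_wing n Y" and wW: "in_top_wing n W" using chain_in_top_wing Y W by auto
  then have "fst W + 2 \<le> fst Y \<and> fst Y \<le> fst W + snd W + 1 \<and> fst W + snd W + 2 \<le> fst Y + snd Y"
    using i didx_top_wing[OF wY wW] False unfolding in_top_wing_def by (auto split: if_splits)
  moreover have "\<not> crosses W Y" using summands_not_crossing W Y chain_subset by blast
  ultimately show ?thesis using chain_covers[OF Y] chain_covers[OF W]
    unfolding crosses_def covers_def by auto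
next
  case True
  \<comment> \<open>such a \<open>\<D>\<close>-map factors through \<open>T\<^sub>1\<close>\<close>
  note n = two_le_n and T1 = top_summand
  have wY: "in_top_wing n Y" and wW: "in_top_wing n W" and wT1: "in_top_wing n (1, n - 1)"
    using chain_in_top_wing Y W n by (auto simp: in_top_wing_def)
  have h: "fst W + snd W = n" "i = n - 1 - fst W"
    using i didx_top_wing_from_start[OF wW True] wY unfolding in_top_wing_def by (auto split: if_splits)
  have dT1W: "n - 1 - fst W \<in> didx n (1, n - 1) W"
    using didx_top_wing_from_start[OF wW, of "(1, n - 1)"] h n by auto
  show ?thesis
  proof (cases "Y = (1, n - 1)")
    case False
    have m1: "(KT, Y, (1, n - 1), 0) \<in> radmorphs n Y (1, n - 1)"
      unfolding radmorphs_iff idx_def using tidx_top_wing[OF wY, of "(1, n - 1)"] wY True False n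
      by (auto simp: has_tmap_def in_top_wing_def prod_eq_iff)
    have m2: "(KD, (1, n - 1), W, n - 1 - fst W) \<in> radmorphs n (1, n - 1) W"
      unfolding radmorphs_iff idx_def using dT1W by auto
    have "comp n (KD, (1, n - 1), W, n - 1 - fst W) (KT, Y, (1, n - 1), 0) = Some (KD, Y, W, i)"
      unfolding comp_def msrc_def mtgt_def mindex_def mkind_def using i h by auto
    then show ?thesis unfolding irreducible_def msrc_def mtgt_def using T1 m1 m2 by fastforce
  next
    case YT: True
    have fW: "2 \<le> fst W" using ne YT h wW unfolding in_top_wing_def by (cases W) auto
    have m1: "(KD, (1, n - 1), (1, n - 1), n - 2) \<in> radmorphs n (1, n - 1) (1, n - 1)"
      unfolding radmorphs_iff idx_def using didx_top_wing_from_start[OF wT1, of "(1, n - 1)"] n by auto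
    have m2: "(KT, (1, n - 1), W, fst W - 1) \<in> radmorphs n (1, n - 1) W"
      unfolding radmorphs_iff idx_def using tidx_top_wing[OF wT1, of W] wW fW h n
      by (auto simp: has_tmap_def in_top_wing_def)
    have "comp n (KT, (1, n - 1), W, fst W - 1) (KD, (1, n - 1), (1, n - 1), n - 2) = Some (KD, Y, W, i)"
      unfolding comp_def msrc_def mtgt_def mindex_def mkind_def using i h YT dT1W by auto
    then show ?thesis unfolding irreducible_def msrc_def mtgt_def using T1 m1 m2 YT by fastforce
  qed
qed

lemma chain_factor_between:
  assumes Y: "Y \<in> C" and W: "W \<in> C" and U: "U \<in> S"
    and YU: "has_tmap Y U" and UW: "has_tmap U W" and YW: "has_tmap Y W"
  shows "U \<in> C \<and> min (snd Y) (snd W) \<le> snd U \<and> snd U \<le> max (snd Y) (snd W)"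
proof -
  have cY: "covers Y p" and cW: "covers W p" using chain_covers Y W by auto
  consider "in_wing Y W" | "in_wing W Y" using chain_nested Y W by blast
  then show ?thesis
  proof cases
    case 1
    then have "covers U p" "in_wing U W" "snd Y \<le> snd U" "snd U \<le> snd W"
      using YU UW YW cY unfolding has_tmap_def in_wing_def covers_def by auto
    then show ?thesis using chain_closed[OF W U] by auto
  next
    case 2
    then have "covers U p" "in_wing U Y" "snd W \<le> snd U" "snd U \<le> snd Y"
      using YU UW YW cW unfolding has_tmap_def in_wing_def covers_def by auto
    then show ?thesis using chain_closed[OF Y U] by auto
  qed
qed

lemma irreducible_tmapI:
  assumes Y: "Y \<in> C" and W: "W \<in> C" and ne: "Y \<noteq> W" and YW: "has_tmap Y W"
    and adj: "chain_adjacent Y W"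
  shows "irreducible n S (tmap Y W)"
proof -
  have YS: "Y \<in> S" and WS: "W \<in> S" using Y W chain_subset by auto
  have rad: "tmap Y W \<in> radmorphs n Y W"
    unfolding radmorphs_iff idx_def tmap_def using tidx_summands[OF YS WS] YW ne by auto
  have False if U: "U \<in> S" and m1: "m1 \<in> radmorphs n Y U" and m2: "m2 \<in> radmorphs n U W"
    and c: "comp n m2 m1 = Some (tmap Y W)" for U m1 m2
  proof -
    obtain k1 i1 where m1e: "m1 = (k1, Y, U, i1)" "i1 \<in> idx n k1 Y U" "m1 \<noteq> (KT, Y, Y, 0)"
      using m1 unfolding radmorphs_iff by auto
    obtain k2 i2 where m2e: "m2 = (k2, U, W, i2)" "i2 \<in> idx n k2 U W" "m2 \<noteq> (KT, U, U, 0)"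
      using m2 unfolding radmorphs_iff by auto
    have kinds: "k1 = KT" "k2 = KT" using comp_eq_tmapD c m1e m2e unfolding tmap_def by auto
    have YU: "has_tmap Y U" "U \<noteq> Y"
      using m1e kinds tidx_summands[OF YS U] unfolding idx_def by (auto split: if_splits)
    have UW: "has_tmap U W" "U \<noteq> W"
      using m2e kinds tidx_summands[OF U WS] unfolding idx_def by (auto split: if_splits)
    have "U \<in> C" and between: "min (snd Y) (snd W) \<le> snd U" "snd U \<le> max (snd Y) (snd W)"
      using chain_factor_between[OF Y W U YU(1) UW(1) YW] by auto
    moreover have "snd U \<noteq> snd Y" "snd U \<noteq> snd W"
      using chain_eq_if_snd_eq \<open>U \<in> C\<close> Y W YU(2) UW(2) by blast+
    ultimately show False using adj unfolding chain_adjacent_def by force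
  qed
  then show ?thesis unfolding irreducible_def using YS WS rad unfolding tmap_def msrc_def mtgt_def by auto
qed

lemma irreducible_in_chainD:
  assumes Y: "Y \<in> C" and W: "W \<in> C" and ne: "Y \<noteq> W" and irr: "irreducible n S m"
    and src: "msrc m = Y" and tgt: "mtgt m = W"
  shows "m = tmap Y W \<and> has_tmap Y W \<and> chain_adjacent Y W"
proof -
  have YS: "Y \<in> S" and WS: "W \<in> S" using Y W chain_subset by auto
  have "m \<in> radmorphs n Y W" using irr src tgt unfolding irreducible_def by auto
  then obtain k i where me: "m = (k, Y, W, i)" "i \<in> idx n k Y W" unfolding radmorphs_iff by auto
  have "k = KT"
    using no_irreducible_dmap[OF Y W ne] me irr unfolding idx_def by (cases k) auto
  then have YW: "has_tmap Y W" and mt: "m = tmap Y W"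
    using me tidx_summands[OF YS WS] unfolding idx_def tmap_def by (auto split: if_splits)
  have False if U: "U \<in> C" and btw: "(snd Y < snd U \<and> snd U < snd W) \<or> (snd W < snd U \<and> snd U < snd Y)" for U
  proof -
    have US: "U \<in> S" using U chain_subset by auto
    have "has_tmap Y U \<and> has_tmap U W"
      using chain_in_wing_if_snd_less[OF Y U] chain_in_wing_if_snd_less[OF U W]
        chain_in_wing_if_snd_less[OF W U] chain_in_wing_if_snd_less[OF U Y] btw YW
      unfolding in_wing_def has_tmap_def by auto
    moreover have "U \<noteq> Y" "U \<noteq> W" using btw by auto
    ultimately have "tmap Y U \<in> radmorphs n Y U" "tmap U W \<in> radmorphs n U W"
      unfolding radmorphs_iff idx_def tmap_def using tidx_summands[OF YS US] tidx_summands[OF US WS]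
      by auto
    moreover have "comp n (tmap U W) (tmap Y U) = Some m"
      using comp_tmap_tmap YW mt unfolding has_tmap_def by auto
    ultimately show False using irr US src tgt unfolding irreducible_def by blast
  qed
  then show ?thesis using mt YW unfolding chain_adjacent_def by blast
qed

lemma string_letter_in_chain:
  assumes w: "is_string n S w" and tr: "traverses_exactly w C" and i: "i < length (snd w)"
  shows "snd w ! i = tletter (verts w ! i) (verts w ! Suc i) \<and> chain_adjacent (verts w ! i) (verts w ! Suc i)"
proof -
  define A where "A = verts w ! i"
  define B where "B = verts w ! Suc i"
  have lv: "Suc i < length (verts w)" using i length_verts by auto
  have AC: "A \<in> C" and BC: "B \<in> C" using tr lv unfolding traverses_exactly_def A_def B_def
    by (metis Suc_lessD nth_mem)+
  have AB: "A \<noteq> B" using tr lv unfolding traverses_exactly_def A_def B_def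
    by (auto simp: nth_eq_iff_index_eq)
  have st: "lstart (snd w ! i) = A" using lstart_string_nth[OF w i] A_def by simp
  have en: "lend (snd w ! i) = B" using verts_nth_Suc[OF i] B_def by simp
  have irr: "irreducible n S (snd (snd w ! i))" using w i unfolding is_string_def Let_def by auto
  have sym: "chain_adjacent B A \<Longrightarrow> chain_adjacent A B" unfolding chain_adjacent_def by blast
  show ?thesis
  proof (cases "fst (snd w ! i)")
    case True
    then have "msrc (snd (snd w ! i)) = B" "mtgt (snd (snd w ! i)) = A"
      using st en unfolding lstart_def lend_def asrc_def atgt_def by auto
    then have "snd (snd w ! i) = tmap B A" "has_tmap B A" "chain_adjacent A B"
      using irreducible_in_chainD[OF BC AC AB[symmetric] irr] sym by auto
    then show ?thesis using True unfolding A_def B_def tletter_def by (metis prod.collapse)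
  next
    case False
    then have "msrc (snd (snd w ! i)) = A" "mtgt (snd (snd w ! i)) = B"
      using st en unfolding lstart_def lend_def asrc_def atgt_def by auto
    then have "snd (snd w ! i) = tmap A B" "has_tmap A B" "chain_adjacent A B"
      using irreducible_in_chainD[OF AC BC AB irr] by auto
    moreover have "\<not> has_tmap B A" using has_tmap_antisym AB \<open>has_tmap A B\<close> by blast
    ultimately show ?thesis using False unfolding A_def B_def tletter_def by (metis prod.collapse)
  qed
qed

lemma string_eq_walk_of_verts:
  assumes w: "is_string n S w" and tr: "traverses_exactly w C"
  shows "w = walk_of (verts w)"
proof -
  have "snd w = map (\<lambda>i. tletter (verts w ! i) (verts w ! Suc i)) [0..<length (verts w) - 1]"
    by (rule nth_equalityI) (auto simp: length_verts string_letter_in_chain[OF w tr])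
  then show ?thesis unfolding walk_of_def by (simp add: verts_def prod_eq_iff)
qed

lemma snd_inj_on_chain: "inj_on snd C"
  using chain_eq_if_snd_eq by (auto simp: inj_on_def)

lemma finite_chain: "finite C"
  using maxrigid chain_subset unfolding maxrigid_def by (auto intro: finite_subset)

definition chain_list :: "ind list" where
  "chain_list = map (the_inv_into C snd) (sorted_list_of_set (snd ` C))"

lemma map_snd_chain_list: "map snd chain_list = sorted_list_of_set (snd ` C)"
  unfolding chain_list_def map_map
  by (rule map_idI) (use finite_chain snd_inj_on_chain in \<open>auto intro: f_the_inv_into_f\<close>)

lemma set_chain_list: "set chain_list = C"
  unfolding chain_list_def using finite_chain the_inv_into_onto[OF snd_inj_on_chain] by simp

lemma chain_list_nth: "i < length chain_list \<Longrightarrow> chain_list ! i \<in> C"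
  using set_chain_list nth_mem by blast

lemma sorted_chain_list: "sorted (map snd chain_list)"
  and distinct_snd_chain_list: "distinct (map snd chain_list)"
  unfolding map_snd_chain_list by simp_all

lemma chain_list_unique:
  assumes "set xs = C" "distinct xs" "sorted (map snd xs)"
  shows "xs = chain_list"
proof -
  have "distinct (map snd xs)" using assms(1,2) snd_inj_on_chain by (simp add: distinct_map)
  then have "map snd xs = map snd chain_list"
    using sorted_list_of_set.idem_if_sorted_distinct[of "map snd xs"] assms(1,3)
    by (simp add: map_snd_chain_list)
  moreover have "inj_on snd (set xs \<union> set chain_list)" using assms(1) set_chain_list snd_inj_on_chain by simp
  ultimately show ?thesis using inj_on_map_eq_map by blast
qed

lemma chain_list_adjacent:
  assumes i: "Suc i < length chain_list"
  shows "snd (chain_list ! i) < snd (chain_list ! Suc i) \<and> chain_adjacent (chain_list ! i) (chain_list ! Suc i)"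
proof -
  let ?ys = "map snd chain_list"
  have sw: "sorted_wrt (<) ?ys" using sorted_chain_list distinct_snd_chain_list strict_sorted_iff by blast
  have lt: "?ys ! i < ?ys ! Suc i" using sorted_wrt_nth_less[OF sw, of i "Suc i"] i by auto
  have False if U: "U \<in> C" and b: "?ys ! i < snd U" "snd U < ?ys ! Suc i" for U
  proof -
    obtain k where k: "k < length chain_list" "U = chain_list ! k"
      using U set_chain_list by (metis in_set_conv_nth)
    have "\<not> k \<le> i" using sorted_nth_mono[OF sorted_chain_list, of k i] k b i by auto
    moreover have "\<not> Suc i \<le> k" using sorted_nth_mono[OF sorted_chain_list, of "Suc i" k] k b by auto
    ultimately show False by auto
  qed
  then show ?thesis using lt i unfolding chain_adjacent_def by fastforce
qed

lemma string_verts_eq_chain_list: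
  assumes w: "is_string n S w" and tr: "traverses_exactly w C" and top: "\<forall>u\<in>C. snd u \<le> snd (endv w)"
  shows "verts w = chain_list"
proof -
  let ?xs = "map snd (verts w)"
  have dv: "distinct (verts w)" and sv: "set (verts w) = C" using tr unfolding traverses_exactly_def by auto
  have dx: "distinct ?xs" using dv snd_inj_on_chain sv by (simp add: distinct_map)
  have "last ?xs = snd (endv w)" unfolding endv_def verts_def by (simp add: last_map)
  then have mx: "\<forall>y\<in>set ?xs. y \<le> last ?xs" using top sv by auto
  have nb: "\<forall>i. Suc i < length ?xs \<longrightarrow>
      (\<forall>y\<in>set ?xs. \<not> (?xs ! i < y \<and> y < ?xs ! Suc i) \<and> \<not> (?xs ! Suc i < y \<and> y < ?xs ! i))"
  proof (intro allI impI)
    fix i assume "Suc i < length ?xs"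
    then have "i < length (snd w)" by (simp add: length_verts)
    then have "chain_adjacent (verts w ! i) (verts w ! Suc i)" using string_letter_in_chain[OF w tr] by blast
    then show "\<forall>y\<in>set ?xs. \<not> (?xs ! i < y \<and> y < ?xs ! Suc i) \<and> \<not> (?xs ! Suc i < y \<and> y < ?xs ! i)"
      using \<open>Suc i < length ?xs\<close> sv unfolding chain_adjacent_def by auto
  qed
  have "sorted ?xs" by (rule sorted_if_no_value_skipped[OF dx _ mx nb]) (simp add: verts_def)
  then show ?thesis using chain_list_unique sv dv by blast
qed

lemma chain_list_letter:
  assumes i: "Suc i < length chain_list"
  shows "irreducible n S (snd (tletter (chain_list ! i) (chain_list ! Suc i))) \<and>
    (fst (tletter (chain_list ! i) (chain_list ! Suc i)) \<longrightarrow>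
       fst (chain_list ! i) + snd (chain_list ! i) = fst (chain_list ! Suc i) + snd (chain_list ! Suc i)) \<and>
    (\<not> fst (tletter (chain_list ! i) (chain_list ! Suc i)) \<longrightarrow> fst (chain_list ! i) = fst (chain_list ! Suc i))"
proof -
  define A where "A = chain_list ! i"
  define B where "B = chain_list ! Suc i"
  have AC: "A \<in> C" and BC: "B \<in> C" unfolding A_def B_def using chain_list_nth i by auto
  have lt: "snd A < snd B" and adj: "chain_adjacent A B"
    using chain_list_adjacent[OF i] unfolding A_def B_def by auto
  have adj': "chain_adjacent B A" using adj unfolding chain_adjacent_def by blast
  have AB: "A \<noteq> B" using lt by auto
  have AB_wing: "in_wing A B" using chain_in_wing_if_snd_less[OF AC BC lt] .
  have sA: "1 \<le> snd A" using chain_in_top_wing[OF AC] unfolding in_top_wing_def by simp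
  consider "fst A = fst B" | "fst A \<noteq> fst B" "fst A + snd A = fst B + snd B"
    using chain_neighbours_share_end[OF AC BC lt adj] by blast
  then show ?thesis
  proof cases
    case 1
    have AB_map: "has_tmap A B" using 1 lt sA unfolding has_tmap_def by auto
    moreover have "\<not> has_tmap B A" using has_tmap_antisym AB \<open>has_tmap A B\<close> by blast
    ultimately have "tletter A B = (False, tmap A B)" unfolding tletter_def by simp
    then show ?thesis using irreducible_tmapI[OF AC BC AB AB_map adj] 1
      unfolding A_def B_def by simp
  next
    case 2
    have "has_tmap B A" using 2 AB_wing sA unfolding has_tmap_def in_wing_def by auto
    then have "tletter A B = (True, tmap B A)" unfolding tletter_def by auto
    then show ?thesis using irreducible_tmapI[OF BC AC AB[symmetric] \<open>has_tmap B A\<close> adj'] 2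
      unfolding A_def B_def by simp
  qed
qed

lemma chain_list_segment_not_zero_relation:
  assumes ij: "i \<le> j" "Suc j < length chain_list"
  defines "seg \<equiv> map (\<lambda>r. tletter (chain_list ! r) (chain_list ! Suc r)) [i..<Suc j]"
  shows "((\<forall>l\<in>set seg. fst l) \<longrightarrow> \<not> zero_relation n S (map snd seg)) \<and>
    ((\<forall>l\<in>set seg. \<not> fst l) \<longrightarrow> \<not> zero_relation n S (rev (map snd seg)))"
proof -
  let ?Y = "\<lambda>r. chain_list ! r"
  have rng: "\<And>r. r \<le> j \<Longrightarrow> Suc r < length chain_list" using ij by auto
  have pos: "1 \<le> snd (?Y r)" if "r \<le> j" for r
    using chain_in_top_wing[OF chain_list_nth] rng[OF that] unfolding in_top_wing_def by simp
  have "peval n (map (\<lambda>r. tmap (?Y (Suc r)) (?Y r)) [i..<Suc j]) \<noteq> None"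
    if all: "\<forall>l\<in>set seg. fst l"
  proof -
    have "fst (?Y r) + snd (?Y r) = fst (?Y (Suc r)) + snd (?Y (Suc r)) \<and> 1 \<le> snd (?Y r)"
      if "i \<le> r" "r \<le> j" for r
      using chain_list_letter[OF rng[OF that(2)]] pos[OF that(2)] all that unfolding seg_def by auto
    then show ?thesis using peval_tmaps_common_end[of i j ?Y n] ij(1) by auto
  qed
  moreover have "peval n (rev (map (\<lambda>r. tmap (?Y r) (?Y (Suc r))) [i..<Suc j])) \<noteq> None"
    if all: "\<forall>l\<in>set seg. \<not> fst l"
  proof -
    have "fst (?Y r) = fst (?Y (Suc r)) \<and> 1 \<le> snd (?Y r)" if "i \<le> r" "r \<le> j" for r
      using chain_list_letter[OF rng[OF that(2)]] pos[OF that(2)] all that unfolding seg_def by auto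
    then show ?thesis using peval_tmaps_common_start[of i j ?Y n] ij(1) by auto
  qed
  moreover have "map snd seg = map (\<lambda>r. tmap (?Y (Suc r)) (?Y r)) [i..<Suc j]" if "\<forall>l\<in>set seg. fst l"
    unfolding seg_def map_map
  proof (rule map_cong)
    fix r assume "r \<in> set [i..<Suc j]"
    then have "fst (tletter (?Y r) (?Y (Suc r)))" using that unfolding seg_def by auto
    then show "(snd \<circ> (\<lambda>r. tletter (?Y r) (?Y (Suc r)))) r = tmap (?Y (Suc r)) (?Y r)"
      unfolding tletter_def by (simp split: if_splits)
  qed simp
  moreover have "map snd seg = map (\<lambda>r. tmap (?Y r) (?Y (Suc r))) [i..<Suc j]" if "\<forall>l\<in>set seg. \<not> fst l"
    unfolding seg_def map_map
  proof (rule map_cong)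
    fix r assume "r \<in> set [i..<Suc j]"
    then have "\<not> fst (tletter (?Y r) (?Y (Suc r)))" using that unfolding seg_def by auto
    then show "(snd \<circ> (\<lambda>r. tletter (?Y r) (?Y (Suc r)))) r = tmap (?Y r) (?Y (Suc r))"
      unfolding tletter_def by (simp split: if_splits)
  qed simp
  ultimately show ?thesis unfolding zero_relation_def by auto
qed

lemma walk_of_chain_list_is_string:
  assumes "C \<noteq> {}"
  shows "is_string n S (walk_of chain_list)"
proof -
  let ?N = "length chain_list"
  let ?ls = "snd (walk_of chain_list)"
  have ne: "chain_list \<noteq> []" using assms set_chain_list by auto
  have ls_nth: "?ls ! r = tletter (chain_list ! r) (chain_list ! Suc r)" if "r < ?N - 1" for r
    using that unfolding walk_of_def by simp
  have len: "length ?ls = ?N - 1" unfolding walk_of_def by simp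
  have start: "fst (walk_of chain_list) \<in> S"
    using ne chain_list_nth[of 0] chain_subset unfolding walk_of_def by (auto simp: hd_conv_nth)
  have irr: "\<forall>l\<in>set ?ls. irreducible n S (snd l)"
    using chain_list_letter unfolding walk_of_def by auto
  have first: "?ls \<noteq> [] \<longrightarrow> lstart (hd ?ls) = fst (walk_of chain_list)"
    using ne unfolding walk_of_def by (auto simp: hd_conv_nth upt_conv_Cons)
  have steps: "lend (?ls ! i) = lstart (?ls ! Suc i) \<and> ?ls ! Suc i \<noteq> (\<not> fst (?ls ! i), snd (?ls ! i))"
    if i: "Suc i < length ?ls" for i
  proof -
    have i': "Suc i < ?N - 1" using i len by simp
    have li: "?ls ! i = tletter (chain_list ! i) (chain_list ! Suc i)" using ls_nth i' by simp
    have lSi: "?ls ! Suc i = tletter (chain_list ! Suc i) (chain_list ! Suc (Suc i))" using ls_nth i' by simp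
    have "chain_list ! i \<noteq> chain_list ! Suc (Suc i)"
      using distinct_snd_chain_list i' by (auto simp: nth_eq_iff_index_eq distinct_map)
    then show ?thesis unfolding li lSi using tletter_not_inverse by simp
  qed
  have segs: "\<forall>i j. i \<le> j \<and> j < length ?ls \<longrightarrow>
      ((\<forall>l\<in>set (drop i (take (Suc j) ?ls)). fst l) \<longrightarrow>
         \<not> zero_relation n S (map snd (drop i (take (Suc j) ?ls)))) \<and>
      ((\<forall>l\<in>set (drop i (take (Suc j) ?ls)). \<not> fst l) \<longrightarrow>
         \<not> zero_relation n S (rev (map snd (drop i (take (Suc j) ?ls)))))"
  proof (intro allI impI)
    fix i j assume ij: "i \<le> j \<and> j < length ?ls"
    then have hj: "Suc j < length chain_list" using len by linarith
    from ij have eq: "drop i (take (Suc j) ?ls) = map (\<lambda>r. tletter (chain_list ! r) (chain_list ! Suc r)) [i..<Suc j]"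
      using len unfolding walk_of_def by (simp add: take_map drop_map take_upt drop_upt)
    show "((\<forall>l\<in>set (drop i (take (Suc j) ?ls)). fst l) \<longrightarrow>
         \<not> zero_relation n S (map snd (drop i (take (Suc j) ?ls)))) \<and>
      ((\<forall>l\<in>set (drop i (take (Suc j) ?ls)). \<not> fst l) \<longrightarrow>
         \<not> zero_relation n S (rev (map snd (drop i (take (Suc j) ?ls)))))"
      unfolding eq by (rule chain_list_segment_not_zero_relation) (use ij hj in auto)
  qed
  have "\<forall>i. Suc i < length ?ls \<longrightarrow> lend (?ls ! i) = lstart (?ls ! Suc i) \<and>
      ?ls ! Suc i \<noteq> (\<not> fst (?ls ! i), snd (?ls ! i))"
    using steps by blast
  then show ?thesis unfolding is_string_def Let_def using start irr first segs by (simp only:)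
qed

theorem chain_unique_string:
  assumes "C \<noteq> {}"
  shows "\<exists>v\<in>C. (\<forall>u\<in>C. u \<noteq> v \<longrightarrow> snd u < snd v) \<and>
    (\<exists>!w. is_string n S w \<and> traverses_exactly w C \<and> endv w = v)"
proof -
  let ?w = "walk_of chain_list"
  have ne: "chain_list \<noteq> []" using assms set_chain_list by auto
  define v where "v = last chain_list"
  have vC: "v \<in> C" unfolding v_def using last_in_set[OF ne] set_chain_list by simp
  have top: "snd u < snd v" if u: "u \<in> C" "u \<noteq> v" for u
  proof -
    obtain k where k: "k < length chain_list" "u = chain_list ! k"
      using u(1) set_chain_list in_set_conv_nth[of u chain_list] by auto
    have v: "v = chain_list ! (length chain_list - 1)" unfolding v_def using ne by (rule last_conv_nth)
    then have "k < length chain_list - 1" using k u(2) by (cases "k = length chain_list - 1") auto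
    moreover have "sorted_wrt (<) (map snd chain_list)"
      using sorted_chain_list distinct_snd_chain_list strict_sorted_iff by blast
    ultimately show ?thesis using sorted_wrt_nth_less[of "(<)" "map snd chain_list" k "length chain_list - 1"]
      k v ne by simp
  qed
  have "distinct chain_list" using distinct_snd_chain_list by (simp add: distinct_map)
  then have tr: "traverses_exactly ?w C" and ev: "endv ?w = v"
    unfolding traverses_exactly_def endv_def verts_walk_of[OF ne] v_def using set_chain_list by auto
  have "w = ?w" if w: "is_string n S w" "traverses_exactly w C" "endv w = v" for w
  proof -
    have "\<forall>u\<in>C. snd u \<le> snd (endv w)" using top w(3) by (metis order.order_iff_strict)
    then have "verts w = chain_list" using string_verts_eq_chain_list[OF w(1,2)] by blast
    have "w = walk_of (verts w)" by (rule string_eq_walk_of_verts[OF w(1,2)])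
    also have "\<dots> = ?w" using \<open>verts w = chain_list\<close> by simp
    finally show ?thesis .
  qed
  then show ?thesis using walk_of_chain_list_is_string[OF assms] tr ev vC top by blast
qed

lemma string_letters_are_tmaps:
  assumes w: "is_string n S w" and tr: "traverses_exactly w C"
  shows "\<forall>l\<in>set (snd w). mkind (snd l) = KT"
proof
  fix l assume "l \<in> set (snd w)"
  then obtain i where "i < length (snd w)" "l = snd w ! i" by (auto simp: in_set_conv_nth)
  then show "mkind (snd l) = KT" using string_letter_in_chain[OF w tr] by simp
qed

lemma chain_no_subwing_pair:
  assumes sw: "subwing_triple n Ti (Some Tj) (Some Tk)" and Ti: "Ti \<in> S"
    and Tj: "Tj \<in> C" and Tk: "Tk \<in> C"
  shows False
proof -
  obtain a b c where abc: "Ti = (a, b)" "1 \<le> c" "c \<le> b - 2"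
    "Tj = (a, c)" "Tk = (cnorm n (a + c + 1), b - c - 1)"
    using sw unfolding subwing_triple_def by auto
  have "cnorm n (a + c + 1) = a + c + 1"
    using summand_in_top_wing[OF Ti] abc unfolding in_top_wing_def by (intro cnorm_eqI) auto
  then show False using chain_covers[OF Tj] chain_covers[OF Tk] abc unfolding covers_def by auto
qed

end

lemma pointed_chainI:
  assumes "2 \<le> n" "maxrigid n S" "(1, n - 1) \<in> S" "C \<subseteq> S"
    and mem: "\<And>Y. Y \<in> S \<Longrightarrow> Y \<in> C \<longleftrightarrow> covers Y p \<and> P Y"
    and mono: "\<And>U Y. in_wing U Y \<Longrightarrow> P Y \<Longrightarrow> P U"
  shows "pointed_chain n S C p"
proof
  show "2 \<le> n" "maxrigid n S" "(1, n - 1) \<in> S" "C \<subseteq> S" by fact+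
  show "covers Y p" if "Y \<in> C" for Y using mem that \<open>C \<subseteq> S\<close> by blast
  show "U \<in> C" if "Y \<in> C" "U \<in> S" "covers U p" "in_wing U Y" for Y U
    using mem mono that \<open>C \<subseteq> S\<close> by blast
qed

lemma Rk_KT_iff:
  assumes "in_top_wing n Y" "X \<in> ind n"
  shows "Y \<in> Rk n KT X \<longleftrightarrow> covers Y (fst X) \<and> fst Y + snd Y \<le> fst X + snd X"
proof -
  have "Y \<in> ind n" using assms(1) unfolding in_top_wing_def ind_def by (cases Y) auto
  then have "Y \<in> Rk n KT X \<longleftrightarrow> has_tmap Y X"
    using assms tidx_top_wing[of n Y X] unfolding Rk_def idx_def ind_def by auto
  then show ?thesis unfolding has_tmap_def covers_def by auto
qed

lemma Rk_KD_iff: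
  assumes Y: "in_top_wing n Y" and X: "X \<in> ind n"
  defines "z \<equiv> cnorm n (fst X + snd X + 1)"
  shows "Y \<in> Rk n KD X \<longleftrightarrow> covers Y z \<and> z - fst Y < snd X"
proof -
  define s where "s = cnorm n (fst X + snd X + 2 - fst Y)"
  have n: "0 < n" and wY: "1 \<le> fst Y" "1 \<le> snd Y" "fst Y + snd Y \<le> n"
    using Y unfolding in_top_wing_def by auto
  have "(z + 1 - fst Y) mod n = ((fst X + snd X + 1) + 1 - fst Y) mod n"
    unfolding z_def by (intro mod_diff_cong mod_add_cong) (simp_all add: cnorm_mod_eq)
  also have "(fst X + snd X + 1) + 1 - fst Y = fst X + snd X + 2 - fst Y" by simp
  finally have arg_mod: "(fst X + snd X + 2 - fst Y) mod n = (z + 1 - fst Y) mod n" ..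
  then have "s mod n = (z + 1 - fst Y) mod n" unfolding s_def cnorm_mod_eq .
  then have "n dvd s - (z + 1 - fst Y)" by (simp only: mod_eq_dvd_iff)
  moreover have "z mod n = (fst X + snd X + 1) mod n" unfolding z_def by (rule cnorm_mod_eq)
  then have "n dvd z - (fst X + snd X + 1)" by (simp only: mod_eq_dvd_iff)
  ultimately have "n dvd (s - (z + 1 - fst Y)) + (z - (fst X + snd X + 1))" by (rule dvd_add)
  also have "(s - (z + 1 - fst Y)) + (z - (fst X + snd X + 1)) = - ((fst X + snd X + 1) - (fst Y + s - 1))"
    by simp
  finally have z_mod: "(fst X + snd X + 1) mod n = (fst Y + s - 1) mod n"
    by (simp only: mod_eq_dvd_iff dvd_minus_iff)
  have s_bounds: "1 \<le> s" "s \<le> n" unfolding s_def using cnorm_bounds[OF n] by auto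
  have s_eq: "s = z + 1 - fst Y" if "covers Y z"
    unfolding s_def using that arg_mod wY unfolding covers_def by (intro cnorm_eqI) auto
  have z_eq: "z = fst Y + s - 1" if "s \<le> snd Y"
    unfolding z_def using z_mod that s_bounds wY by (intro cnorm_eqI) auto
  have cov: "s \<le> snd Y \<longleftrightarrow> covers Y z"
  proof
    assume "s \<le> snd Y"
    then show "covers Y z" using z_eq s_bounds unfolding covers_def by simp
  next
    assume "covers Y z"
    then show "s \<le> snd Y" using s_eq unfolding covers_def by simp
  qed
  have "Y \<in> ind n" using wY unfolding ind_def by (cases Y) auto
  then have "Y \<in> Rk n KD X \<longleftrightarrow> didx n Y X \<noteq> {}" unfolding Rk_def idx_def by simp
  also have "\<dots> \<longleftrightarrow> s \<le> snd X \<and> s \<le> snd Y"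
    unfolding s_def using didx_ne_iff_short_target[OF n, of Y X] wY by simp
  also have "\<dots> \<longleftrightarrow> covers Y z \<and> z - fst Y < snd X"
    using cov s_eq by auto
  finally show ?thesis .
qed

lemma pointed_chain_Rk:
  assumes n: "2 \<le> n" and mr: "maxrigid n S" and T1: "(1, n - 1) \<in> S" and X: "X \<in> ind n"
  shows "\<exists>p. pointed_chain n S (Rk n k X \<inter> S) p"
proof (cases k)
  case KT
  have "pointed_chain n S (Rk n k X \<inter> S) (fst X)"
    using Rk_KT_iff[OF maxrigid_summand_in_top_wing[OF n mr T1] X] KT
    by (intro pointed_chainI[OF n mr T1, where P = "\<lambda>Y. fst Y + snd Y \<le> fst X + snd X"])
      (auto simp: in_wing_def)
  then show ?thesis by blast
next
  case KD
  define z where "z = cnorm n (fst X + snd X + 1)"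
  have "pointed_chain n S (Rk n k X \<inter> S) z"
    using Rk_KD_iff[OF maxrigid_summand_in_top_wing[OF n mr T1] X] KD unfolding z_def[symmetric]
    by (intro pointed_chainI[OF n mr T1, where P = "\<lambda>Y. z - fst Y < snd X"])
      (auto simp: in_wing_def)
  then show ?thesis by blast
qed

lemma Rall_iff: "Y \<in> Rall n X \<longleftrightarrow> Y \<in> ind n \<and> homC n Y X"
  unfolding Rall_def Rk_def idx_def homC_def by auto

lemma homC_tauinv_tau:
  assumes "0 < n" "1 \<le> fst X" "fst X \<le> n" "1 \<le> fst Y" "fst Y \<le> n"
  shows "homC n (tauinv n X) (tau n Y) \<longleftrightarrow> homC n Y X"
proof -
  have "didx n (tauinv n X) (tau n Y) = tidx n Y X"
    unfolding didx_def using tauinv_tau[of Y n] tau_tauinv[of X n] assms by simp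
  then show ?thesis unfolding homC_def didx_def by auto
qed

lemma not_ext1_tauinv_self:
  assumes n: "0 < n" and X: "X \<in> ind n" "snd X \<le> n - 1"
  shows "\<not> ext1 n (tauinv n X) (tauinv n X)"
proof -
  let ?Y = "tauinv n X"
  have tY: "tau n ?Y = X" using tau_tauinv[of X n] X unfolding ind_def by auto
  have "(fst X - fst ?Y) mod n = (fst X - (fst X + 1)) mod n"
    by (rule mod_diff_cong) (simp_all add: fst_tauinv_mod)
  also have "\<dots> = n - 1" using zmod_minus1[OF n] by simp
  finally have "tidx n ?Y X = {}"
    using tidx_eq_if_short_source[OF n, of ?Y X] X by (simp add: tauinv_def Let_def)
  moreover have "didx n ?Y X = tidx n ?Y X" unfolding didx_def tY ..
  ultimately show ?thesis unfolding ext1_def homC_def tY by simp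
qed

theorem Rall_disjoint_iff_tau_summand:
  assumes n: "2 \<le> n" and mr: "maxrigid n S" and T1: "(1, n - 1) \<in> S" and XF: "X \<in> Fregion n"
  shows "Rall n X \<inter> S = {} \<longleftrightarrow> X \<in> tau n ` S"
proof
  have n0: "0 < n" using n by simp
  have X: "X \<in> ind n" using XF unfolding Fregion_def by auto
  then have Xr: "1 \<le> fst X" "fst X \<le> n" "1 \<le> snd X" unfolding ind_def by auto
  have SI: "S \<subseteq> ind n" using maxrigid_subset_ind[OF mr] .
  assume E: "Rall n X \<inter> S = {}"
  then have noHom: "\<not> homC n Z X" if "Z \<in> S" for Z using that SI Rall_iff by blast
  have short: "snd X \<le> n - 1"
  proof (rule ccontr)
    assume "\<not> snd X \<le> n - 1"
    then have "has_tmap (1, n - 1) X" using XF Xr unfolding Fregion_def has_tmap_def by auto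
    then have "tidx n (1, n - 1) X \<noteq> {}"
      using tidx_top_wing[of n "(1, n - 1)" X] Xr n by (auto simp: in_top_wing_def)
    then show False using noHom[OF T1] unfolding homC_def by blast
  qed
  let ?Y = "tauinv n X"
  have tY: "tau n ?Y = X" using tau_tauinv[of X n] Xr by auto
  have "?Y \<in> S"
  proof (rule maxrigid_memI[OF mr])
    show "?Y \<in> ind n" using cnorm_bounds[OF n0] Xr unfolding tauinv_def ind_def by auto
    show "\<not> ext1 n ?Y ?Y" using not_ext1_tauinv_self[OF n0 X short] .
    show "\<not> ext1 n ?Y Z \<and> \<not> ext1 n Z ?Y" if "Z \<in> S" for Z
      using noHom[OF that] homC_tauinv_tau[OF n0 Xr(1,2), of Z] SI that tY
      unfolding ext1_def ind_def by auto
  qed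
  then show "X \<in> tau n ` S" using tY by force
next
  assume "X \<in> tau n ` S"
  then obtain Y0 where Y0: "Y0 \<in> S" "X = tau n Y0" by auto
  have "\<not> homC n Y X" if "Y \<in> S" for Y
    using maxrigid_no_ext1[OF mr that Y0(1)] Y0(2) unfolding ext1_def by simp
  then show "Rall n X \<inter> S = {}" using Rall_iff by blast
qed

theorem lemma4p4:
  fixes n :: int and S :: "ind set" and X :: ind
  assumes "n \<ge> 2" and "maxrigid n S" and "(1, n - 1) \<in> S" and "X \<in> Fregion n"
  shows "(Rall n X \<inter> S = {} \<longleftrightarrow> X \<in> tau n ` S) \<and>
    (\<forall>k. (\<forall>Ti Yo Zo. Tsubwing n S Ti Yo Zo \<longrightarrow>
            \<not> (\<exists>Tj Tk. Yo = Some Tj \<and> Zo = Some Tk \<and> Tj \<in> Rk n k X \<and> Tk \<in> Rk n k X)) \<and>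
         (Rk n k X \<inter> S \<noteq> {} \<longrightarrow>
            (\<exists>v\<in>Rk n k X \<inter> S. (\<forall>u\<in>Rk n k X \<inter> S. u \<noteq> v \<longrightarrow> snd u < snd v) \<and>
               (\<exists>!w. is_string n S w \<and> traverses_exactly w (Rk n k X \<inter> S) \<and> endv w = v))) \<and>
         (\<forall>w. is_string n S w \<and> traverses_exactly w (Rk n k X \<inter> S) \<and>
               (\<forall>u\<in>Rk n k X \<inter> S. snd u \<le> snd (endv w)) \<longrightarrow>
               (\<forall>l\<in>set (snd w). mkind (snd l) = KT)))"
proof -
  have "X \<in> ind n" using assms(4) unfolding Fregion_def by auto
  then have chain: "\<exists>p. pointed_chain n S (Rk n k X \<inter> S) p" for k using pointed_chain_Rk assms by blast
  show ?thesis
  proof (intro conjI allI impI)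
    show "Rall n X \<inter> S = {} \<longleftrightarrow> X \<in> tau n ` S"
      using Rall_disjoint_iff_tau_summand assms by blast
  next
    fix k Ti Yo Zo assume "Tsubwing n S Ti Yo Zo"
    then show "\<not> (\<exists>Tj Tk. Yo = Some Tj \<and> Zo = Some Tk \<and> Tj \<in> Rk n k X \<and> Tk \<in> Rk n k X)"
      using chain pointed_chain.chain_no_subwing_pair unfolding Tsubwing_def by fastforce
  next
    fix k assume "Rk n k X \<inter> S \<noteq> {}"
    then show "\<exists>v\<in>Rk n k X \<inter> S. (\<forall>u\<in>Rk n k X \<inter> S. u \<noteq> v \<longrightarrow> snd u < snd v) \<and>
        (\<exists>!w. is_string n S w \<and> traverses_exactly w (Rk n k X \<inter> S) \<and> endv w = v)"
      using chain pointed_chain.chain_unique_string by blast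
  next
    fix k w assume "is_string n S w \<and> traverses_exactly w (Rk n k X \<inter> S) \<and>
      (\<forall>u\<in>Rk n k X \<inter> S. snd u \<le> snd (endv w))"
    then show "\<forall>l\<in>set (snd w). mkind (snd l) = KT"
      using chain pointed_chain.string_letters_are_tmaps by blast
  qed
qed

end
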